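(* Let $n\geq 2$ and let $f:GL_n(R)\rightarrow\mathfrak{gl}_n(R)$ be a $\delta$-map which is a cocycle for the adjoint action, i.e. $f(g_1g_2)=f(g_1)+g_1f(g_2)g_1^{-1}$ for all $g_1,g_2\in GL_n(R)$, and assume $f$ is $\delta$-coherent. Then there exists $\nu\in R$ such that for all $g\in GL_n(R)$, $$f(g)=\nu\cdot\delta g\cdot g^{-1}.$$
   Context: $\delta$-algebraic setting: $R$ is a field of characteristic zero equipped with a derivation $\delta:R\rightarrow R$, and $R$ is $\delta$-closed (constrainedly closed in Kolchin's sense). $R^{\delta}=\{c\in R:\delta c=0\}$ is the field of constants. A map $f:GL_n(R)\rightarrow\mathfrak{gl}_n(R)$ is a $\delta$-map if there is $m$ and a matrix $F$ of polynomials with coefficients in $R$ in the entries of $x,x',\dots,x^{(m)}$ ($n\times n$ matrices of variables) and $\det(x)^{-1}$ such that $f(g)=F(g,\delta g,\dots,\delta^m g)$ for all $g$, with $\delta$ applied entrywise. $f$ is called $\delta$-coherent if for every algebraic subgroup $G\subset GL_n$ defined over $R^{\delta}$ (Zariski closed subgroup defined by polynomial equations with coefficients in $R^{\delta}$), with Lie algebra $L(G)\subset\mathfrak{gl}_n$, one has $f(G(R))\subset L(G)(R)$. *)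

theory Defs
  imports "HOL-Analysis.Analysis" "HOL-Library.Poly_Mapping"
begin

type_synonym ('v, 'a) mpoly = "('v \<Rightarrow>\<^sub>0 nat) \<Rightarrow>\<^sub>0 'a"

definition meval :: "('a::zero \<Rightarrow> 'b::comm_ring_1) \<Rightarrow> ('v, 'a) mpoly \<Rightarrow> ('v \<Rightarrow> 'b) \<Rightarrow> 'b" where
  "meval hom p x = (\<Sum>m\<in>Poly_Mapping.keys p. hom (Poly_Mapping.lookup p m) * (\<Prod>v\<in>Poly_Mapping.keys m. x v ^ Poly_Mapping.lookup m v))"

abbreviation mpeval :: "('v, 'a::comm_ring_1) mpoly \<Rightarrow> ('v \<Rightarrow> 'a) \<Rightarrow> 'a" where
  "mpeval p x \<equiv> meval (\<lambda>c. c) p x"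

definition mvars :: "('v, 'a::zero) mpoly \<Rightarrow> 'v set" where
  "mvars p = (\<Union>m\<in>Poly_Mapping.keys p. Poly_Mapping.keys m)"

definition is_derivation :: "('a::comm_ring_1 \<Rightarrow> 'a) \<Rightarrow> bool" where
  "is_derivation \<delta> \<longleftrightarrow> (\<forall>a b. \<delta> (a + b) = \<delta> a + \<delta> b) \<and> (\<forall>a b. \<delta> (a * b) = a * \<delta> b + \<delta> a * b)"

definition constants :: "('a \<Rightarrow> 'a::zero) \<Rightarrow> 'a set" where
  "constants \<delta> = {c. \<delta> c = 0}"

text \<open>Differential polynomials in one indeterminate y: polynomials in the variables
y, y', y'', ... (variable k stands for the k-th derivative of y).\<close>

definition dpeval :: "('a::comm_ring_1 \<Rightarrow> 'a) \<Rightarrow> (nat, 'a) mpoly \<Rightarrow> 'a \<Rightarrow> 'a" where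
  "dpeval \<delta> p a = mpeval p (\<lambda>k. (\<delta> ^^ k) a)"

text \<open>Order of a differential polynomial (-1 if no derivative of y occurs, i.e. p is
an element of the base field).\<close>

definition dord :: "(nat, 'a::zero) mpoly \<Rightarrow> int" where
  "dord p = (if mvars p = {} then -1 else int (Max (mvars p)))"

text \<open>Differentially closed (= constrainedly closed in Kolchin's sense, for one
derivation in characteristic zero), via Blum's axioms: for every nonconstant f and
nonzero g with ord g < ord f there is a in the field with f(a) = 0 and g(a) <> 0.\<close>

definition delta_closed :: "('a::field_char_0 \<Rightarrow> 'a) \<Rightarrow> bool" where
  "delta_closed \<delta> \<longleftrightarrow> is_derivation \<delta> \<and>
     (\<forall>f g :: (nat, 'a) mpoly. mvars f \<noteq> {} \<and> g \<noteq> 0 \<and> dord g < dord f \<longrightarrow>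
        (\<exists>a. dpeval \<delta> f a = 0 \<and> dpeval \<delta> g a \<noteq> 0))"

definition dmat :: "('a \<Rightarrow> 'a) \<Rightarrow> 'a^'n^'n \<Rightarrow> 'a^'n^'n" where
  "dmat \<delta> g = (\<chi> i j. \<delta> (g $ i $ j))"

text \<open>Variables: Some (d, i, j) stands for the (i,j) entry of the d-th derivative
of the matrix, None stands for det(x)^-1.\<close>

definition delta_map_eval :: "('a::field \<Rightarrow> 'a) \<Rightarrow> ((nat \<times> 'n::finite \<times> 'n) option, 'a) mpoly
     \<Rightarrow> 'a^'n^'n \<Rightarrow> 'a" where
  "delta_map_eval \<delta> P g = mpeval P (\<lambda>v. case v of None \<Rightarrow> inverse (det g)
                                             | Some (d, i, j) \<Rightarrow> (\<delta> ^^ d) (g $ i $ j))"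

definition is_delta_map :: "('a::field \<Rightarrow> 'a) \<Rightarrow> ('a^'n::finite^'n \<Rightarrow> 'a^'n^'n) \<Rightarrow> bool" where
  "is_delta_map \<delta> f \<longleftrightarrow>
     (\<exists>F :: 'n \<Rightarrow> 'n \<Rightarrow> ((nat \<times> 'n \<times> 'n) option, 'a) mpoly.
        \<forall>g. invertible g \<longrightarrow> (\<forall>i j. f g $ i $ j = delta_map_eval \<delta> (F i j) g))"

definition mat_eval :: "('n \<times> 'n, 'a::comm_ring_1) mpoly \<Rightarrow> 'a^'n^'n \<Rightarrow> 'a" where
  "mat_eval p g = mpeval p (\<lambda>(i, j). g $ i $ j)"

definition zero_set_GL :: "('n \<times> 'n, 'a::field) mpoly set \<Rightarrow> ('a^'n::finite^'n) set" where
  "zero_set_GL S = {g. invertible g \<and> (\<forall>p\<in>S. mat_eval p g = 0)}"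

definition is_subgroup_GL :: "('a::field^'n::finite^'n) set \<Rightarrow> bool" where
  "is_subgroup_GL G \<longleftrightarrow> G \<subseteq> {g. invertible g} \<and> mat 1 \<in> G \<and>
     (\<forall>g\<in>G. \<forall>h\<in>G. g ** h \<in> G) \<and> (\<forall>g\<in>G. matrix_inv g \<in> G)"

definition alg_subgroup_over_constants :: "('a::field \<Rightarrow> 'a) \<Rightarrow> ('a^'n::finite^'n) set \<Rightarrow> bool" where
  "alg_subgroup_over_constants \<delta> G \<longleftrightarrow>
     (\<exists>S. (\<forall>p\<in>S. \<forall>m. Poly_Mapping.lookup p m \<in> constants \<delta>) \<and> G = zero_set_GL S) \<and> is_subgroup_GL G"

text \<open>Differential at the identity of p in direction X: coefficient of t in
p(1 + t X).\<close>

definition diff_at_one :: "('n \<times> 'n, 'a::comm_ring_1) mpoly \<Rightarrow> 'a^'n^'n \<Rightarrow> 'a" where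
  "diff_at_one p X = coeff (meval (\<lambda>c. [:c:]) p (\<lambda>(i, j). [: mat 1 $ i $ j, X $ i $ j :])) 1"

definition lie_algebra :: "('a::field^'n::finite^'n) set \<Rightarrow> ('a^'n^'n) set" where
  "lie_algebra G = {X. \<forall>p. (\<forall>g\<in>G. mat_eval p g = 0) \<longrightarrow> diff_at_one p X = 0}"

definition delta_coherent :: "('a::field \<Rightarrow> 'a) \<Rightarrow> ('a^'n::finite^'n \<Rightarrow> 'a^'n^'n) \<Rightarrow> bool" where
  "delta_coherent \<delta> f \<longleftrightarrow>
     (\<forall>G. alg_subgroup_over_constants \<delta> G \<longrightarrow> f ` G \<subseteq> lie_algebra G)"

end

theory Submission
  imports Defs
begin

text \<open>
  Transvections \<open>e\<^sub>i\<^sub>j(s)\<close> and dilations \<open>d\<^sub>i(t)\<close> lie in one-entry subgroups defined over the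
  constants, so coherence forces \<open>f(e\<^sub>i\<^sub>j(s))\<close> and \<open>f(d\<^sub>i(t))\<close> to be supported on the single entry
  (i, j) resp. (i, i).  The cocycle identity turns the coefficient \<open>\<phi>\<^sub>i\<^sub>j(s)\<close> of \<open>f(e\<^sub>i\<^sub>j(s))\<close> into
  a derivation of R (using a finite subgroup of order 4 to get \<open>\<phi>\<^sub>i\<^sub>j(1) = 0\<close>), and \<open>\<phi>\<^sub>i\<^sub>j\<close> is
  given by a differential polynomial since f is a \<open>\<delta>\<close>-map.  Over a \<open>\<delta>\<close>-closed field such a
  derivation is \<open>\<nu> \<delta>\<close>: it kills the solutions of all equations \<open>\<delta>\<^bsup>N\<^esup> y = 0\<close> after subtracting
  \<open>\<nu> \<delta>\<close>, and a nonzero differential polynomial cannot vanish on all of them.  Comparing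
  conjugations by dilations makes \<open>\<nu>\<close> independent of i and j, and determines \<open>\<phi>\<^sub>i\<^sub>i\<close>.  Hence
  f agrees with the cocycle \<open>g \<mapsto> \<nu> \<delta>g g\<^sup>-\<^sup>1\<close> on elementary matrices, which generate \<open>GL\<^sub>n\<close>.
\<close>

section \<open>Evaluation of multivariate polynomials\<close>

definition mon_eval :: "('v \<Rightarrow>\<^sub>0 nat) \<Rightarrow> ('v \<Rightarrow> 'b::comm_ring_1) \<Rightarrow> 'b" where
  "mon_eval m x = (\<Prod>v\<in>Poly_Mapping.keys m. x v ^ Poly_Mapping.lookup m v)"

definition is_ring_hom :: "('a::comm_ring_1 \<Rightarrow> 'b::comm_ring_1) \<Rightarrow> bool" where
  "is_ring_hom h \<longleftrightarrow> h 0 = 0 \<and> h 1 = 1 \<and> (\<forall>a b. h (a + b) = h a + h b) \<and> (\<forall>a b. h (a * b) = h a * h b)"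

definition MVar :: "'v \<Rightarrow> ('v, 'a::comm_ring_1) mpoly" where
  "MVar v = Poly_Mapping.single (Poly_Mapping.single v 1) 1"

definition MConst :: "'a::comm_ring_1 \<Rightarrow> ('v, 'a) mpoly" where
  "MConst c = Poly_Mapping.single 0 c"

lemma meval_eq_sum_mon_eval:
  "meval hom p x = (\<Sum>m\<in>Poly_Mapping.keys p. hom (Poly_Mapping.lookup p m) * mon_eval m x)"
  by (simp add: meval_def mon_eval_def)

lemma mon_eval_superset:
  assumes "finite A" "Poly_Mapping.keys m \<subseteq> A"
  shows "mon_eval m x = (\<Prod>v\<in>A. x v ^ Poly_Mapping.lookup m v)"
  unfolding mon_eval_def
  by (rule prod.mono_neutral_left[OF assms]) (auto simp: in_keys_iff)

lemma meval_superset: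
  assumes "hom 0 = 0" "finite A" "Poly_Mapping.keys p \<subseteq> A"
  shows "meval hom p x = (\<Sum>m\<in>A. hom (Poly_Mapping.lookup p m) * mon_eval m x)"
  unfolding meval_eq_sum_mon_eval
  by (rule sum.mono_neutral_left[OF assms(2,3)]) (auto simp: in_keys_iff assms(1))

lemma mon_eval_add: "mon_eval (m1 + m2) x = mon_eval m1 x * mon_eval m2 x"
proof -
  let ?A = "Poly_Mapping.keys m1 \<union> Poly_Mapping.keys m2"
  have "Poly_Mapping.keys (m1 + m2) \<subseteq> ?A"
    by (auto simp: in_keys_iff lookup_add)
  then have "mon_eval (m1 + m2) x = (\<Prod>v\<in>?A. x v ^ Poly_Mapping.lookup (m1 + m2) v)"
    by (simp add: mon_eval_superset)
  also have "\<dots> = (\<Prod>v\<in>?A. x v ^ Poly_Mapping.lookup m1 v) * (\<Prod>v\<in>?A. x v ^ Poly_Mapping.lookup m2 v)"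
    by (simp add: lookup_add power_add prod.distrib)
  also have "\<dots> = mon_eval m1 x * mon_eval m2 x"
    using mon_eval_superset[of ?A m1 x] mon_eval_superset[of ?A m2 x] by simp
  finally show ?thesis .
qed

lemma mon_eval_single: "mon_eval (Poly_Mapping.single v k) x = x v ^ k"
  by (cases "k = 0") (auto simp: mon_eval_def)

lemma is_ring_hom_id: "is_ring_hom (\<lambda>c. c)"
  by (simp add: is_ring_hom_def)

lemma is_ring_hom_pCons: "is_ring_hom (\<lambda>c. [:c:])"
  by (simp add: is_ring_hom_def)

lemma is_ring_hom_uminus: "is_ring_hom hom \<Longrightarrow> hom (- a) = - hom a"
  unfolding is_ring_hom_def by (metis add.right_inverse add_eq_0_iff)

lemma poly_mapping_eq_sum_single:
  "p = (\<Sum>m\<in>Poly_Mapping.keys p. Poly_Mapping.single m (Poly_Mapping.lookup p m))"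
  by (rule poly_mapping_eqI)
    (auto simp: lookup_sum lookup_single when_def in_keys_iff sum.delta' intro: sym)

lemma times_poly_mapping_eq_sum_single:
  "p * q = (\<Sum>m\<in>Poly_Mapping.keys p. \<Sum>m'\<in>Poly_Mapping.keys q.
     Poly_Mapping.single (m + m') (Poly_Mapping.lookup p m * Poly_Mapping.lookup q m'))"
  by (subst poly_mapping_eq_sum_single[of p], subst poly_mapping_eq_sum_single[of q])
    (simp add: sum_product mult_single)

lemma meval_zero [simp]: "meval hom 0 x = 0"
  by (simp add: meval_def)

lemma meval_single:
  "hom 0 = 0 \<Longrightarrow> meval hom (Poly_Mapping.single m c) x = hom c * mon_eval m x"
  using meval_superset[of hom "{m}"] by simp

context
  fixes hom :: "'a::comm_ring_1 \<Rightarrow> 'b::comm_ring_1"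
  assumes hom: "is_ring_hom hom"
begin

lemma meval_add: "meval hom (p + q) x = meval hom p x + meval hom q x"
proof -
  let ?A = "Poly_Mapping.keys p \<union> Poly_Mapping.keys q"
  have "Poly_Mapping.keys (p + q) \<subseteq> ?A"
    by (auto simp: in_keys_iff lookup_add)
  then show ?thesis
    using hom meval_superset[of hom ?A] unfolding is_ring_hom_def
    by (simp add: lookup_add distrib_right sum.distrib)
qed

lemma meval_sum: "meval hom (\<Sum>i\<in>I. p i) x = (\<Sum>i\<in>I. meval hom (p i) x)"
  by (induction I rule: infinite_finite_induct) (auto simp: meval_add)

lemma meval_mult: "meval hom (p * q) x = meval hom p x * meval hom q x"
proof -
  have "meval hom (p * q) x = (\<Sum>m\<in>Poly_Mapping.keys p. \<Sum>m'\<in>Poly_Mapping.keys q.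
      hom (Poly_Mapping.lookup p m) * mon_eval m x * (hom (Poly_Mapping.lookup q m') * mon_eval m' x))"
    using hom unfolding times_poly_mapping_eq_sum_single[of p q] is_ring_hom_def
    by (simp add: meval_sum meval_single mon_eval_add mult_ac)
  also have "\<dots> = meval hom p x * meval hom q x"
    by (simp add: meval_eq_sum_mon_eval sum_product)
  finally show ?thesis .
qed

lemma meval_one: "meval hom 1 x = 1"
  using hom meval_single[of hom 0 1] by (simp add: is_ring_hom_def mon_eval_def)

lemma meval_prod: "meval hom (\<Prod>i\<in>I. p i) x = (\<Prod>i\<in>I. meval hom (p i) x)"
  by (induction I rule: infinite_finite_induct) (auto simp: meval_mult meval_one)

lemma meval_power: "meval hom (p ^ k) x = meval hom p x ^ k"
  by (induction k) (auto simp: meval_mult meval_one)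

lemma meval_uminus: "meval hom (- p) x = - meval hom p x"
  by (simp add: meval_eq_sum_mon_eval is_ring_hom_uminus[OF hom] sum_negf)

lemma meval_diff: "meval hom (p - q) x = meval hom p x - meval hom q x"
  using meval_add[of p "- q"] by (simp add: meval_uminus)

lemma meval_MVar: "meval hom (MVar v) x = x v"
  using hom by (simp add: MVar_def meval_single is_ring_hom_def mon_eval_single)

lemma meval_MConst: "meval hom (MConst c) x = hom c"
  using hom by (simp add: MConst_def meval_single is_ring_hom_def mon_eval_def)

lemmas meval_simps = meval_add meval_mult meval_diff meval_power meval_MVar meval_MConst meval_one

end

lemma mpeval_subst:
  "mpeval (meval MConst P X) x = mpeval P (\<lambda>v. mpeval (X v) x)"
  unfolding meval_def[of MConst] MConst_def
  by (simp add: meval_sum meval_mult meval_prod meval_power is_ring_hom_id meval_single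
      meval_def[of "\<lambda>c. c" P] mon_eval_def)

lemma poly_meval_pCons:
  "poly (meval (\<lambda>c. [:c:]) P X) z = mpeval P (\<lambda>v. poly (X v) z)"
  unfolding meval_def by (simp add: poly_sum poly_prod)

section \<open>Derivations\<close>

locale derivation =
  fixes \<delta> :: "'a::field_char_0 \<Rightarrow> 'a"
  assumes add: "\<delta> (a + b) = \<delta> a + \<delta> b"
    and mult: "\<delta> (a * b) = a * \<delta> b + \<delta> a * b"
begin

lemma zero [simp]: "\<delta> 0 = 0"
  using add[of 0 0] by simp

lemma one [simp]: "\<delta> 1 = 0"
  using mult[of 1 1] by simp

lemma uminus: "\<delta> (- a) = - \<delta> a"
  using add[of a "- a"] by (simp add: add_eq_0_iff)

lemma diff: "\<delta> (a - b) = \<delta> a - \<delta> b"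
  using add[of a "- b"] by (simp add: uminus)

lemma sum: "\<delta> (\<Sum>i\<in>I. f i) = (\<Sum>i\<in>I. \<delta> (f i))"
  by (induction I rule: infinite_finite_induct) (auto simp: add)

lemma of_nat [simp]: "\<delta> (of_nat k) = 0"
  by (induction k) (auto simp: add)

lemma power_Suc: "\<delta> (x ^ Suc k) = of_nat (Suc k) * x ^ k * \<delta> x"
  by (induction k) (simp_all add: mult algebra_simps)

lemma mult_constant: "\<delta> c = 0 \<Longrightarrow> \<delta> (c * x) = c * \<delta> x"
  by (simp add: mult)

lemma inverse: "a \<noteq> 0 \<Longrightarrow> \<delta> (inverse a) = - \<delta> a / a\<^sup>2"
  using mult[of a "inverse a"] by (simp add: field_simps power2_eq_square add_eq_0_iff)

lemma divide_constants: "\<delta> c = 0 \<Longrightarrow> \<delta> d = 0 \<Longrightarrow> \<delta> (c / d) = 0"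
  by (cases "d = 0") (auto simp: divide_inverse mult inverse)

lemma kernel_funpow_eq_poly:
  assumes t: "\<delta> t = 1" and "(\<delta> ^^ N) a = 0"
  shows "\<exists>c. (\<forall>k. \<delta> (c k) = 0) \<and> a = (\<Sum>k<N. c k * t ^ k)"
  using assms(2)
proof (induction N arbitrary: a)
  case 0
  then show ?case by (intro exI[of _ "\<lambda>_. 0"]) simp
next
  case (Suc N)
  have "(\<delta> ^^ N) (\<delta> a) = 0"
    using Suc.prems by (simp add: funpow_Suc_right del: funpow.simps)
  then obtain c where c: "\<And>k. \<delta> (c k) = 0" and da: "\<delta> a = (\<Sum>k<N. c k * t ^ k)"
    using Suc.IH by blast
  define b where "b = (\<Sum>k<N. c k / of_nat (Suc k) * t ^ Suc k)"
  have "\<delta> (c k / of_nat (Suc k) * t ^ Suc k) = c k * t ^ k" for k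
  proof -
    have "\<delta> (c k / of_nat (Suc k) * t ^ Suc k) = c k / of_nat (Suc k) * \<delta> (t ^ Suc k)"
      by (rule mult_constant[OF divide_constants[OF c of_nat]])
    also have "\<dots> = c k * t ^ k"
      by (simp only: power_Suc t) (simp del: of_nat_Suc)
    finally show ?thesis .
  qed
  then have db: "\<delta> b = \<delta> a"
    by (simp only: b_def sum da)
  define c' where "c' k = (if k = 0 then a - b else c (k - 1) / of_nat k)" for k
  have "\<forall>k. \<delta> (c' k) = 0"
    by (auto simp: c'_def diff db divide_constants c)
  moreover have "a = (\<Sum>k<Suc N. c' k * t ^ k)"
    unfolding sum.lessThan_Suc_shift by (simp add: c'_def b_def)
  ultimately show ?case by blast
qed

lemma poly_in_kernel_of_derivation:
  assumes "derivation E" "E t = 0" "\<And>c. \<delta> c = 0 \<Longrightarrow> E c = 0" "\<And>k. \<delta> (c k) = 0"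
  shows "E (\<Sum>k<N. c k * t ^ k) = 0"
proof -
  interpret E: derivation E by fact
  have "E (t ^ k) = 0" for k
    by (induction k) (simp_all add: E.mult assms(2))
  then show ?thesis
    by (simp add: E.sum E.mult assms(3,4))
qed

end

lemma derivation_if_delta_closed: "delta_closed \<delta> \<Longrightarrow> derivation \<delta>"
  by (simp add: delta_closed_def is_derivation_def derivation_def)

section \<open>Differential polynomials over a differentially closed field\<close>

lemma dpeval_MVar: "dpeval \<delta> (MVar k) a = (\<delta> ^^ k) a"
  by (simp add: dpeval_def meval_MVar[OF is_ring_hom_id])

lemma dpeval_MConst: "dpeval \<delta> (MConst c) a = c"
  by (simp add: dpeval_def meval_MConst[OF is_ring_hom_id])

lemma dpeval_diff: "dpeval \<delta> (p - q) a = dpeval \<delta> p a - dpeval \<delta> q a"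
  unfolding dpeval_def by (rule meval_diff[OF is_ring_hom_id])

lemma dpeval_mult: "dpeval \<delta> (p * q) a = dpeval \<delta> p a * dpeval \<delta> q a"
  unfolding dpeval_def by (rule meval_mult[OF is_ring_hom_id])

lemma mvars_MVar: "mvars (MVar k :: ('v, 'a::comm_ring_1) mpoly) = {k}"
  by (simp add: mvars_def MVar_def)

lemma mvars_MConst: "mvars (MConst c) = {}"
  by (simp add: mvars_def MConst_def)

lemma MConst_eq_0_iff [simp]: "MConst c = 0 \<longleftrightarrow> c = 0"
  by (metis MConst_def lookup_single_eq lookup_zero single_zero)

lemma mvars_diff_MConst: "mvars (p - MConst c) = mvars (p :: ('v, 'a::comm_ring_1) mpoly)"
proof -
  have drop_0: "\<Union> (Poly_Mapping.keys ` A) = \<Union> (Poly_Mapping.keys ` (A - {0}))"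
    for A :: "('v \<Rightarrow>\<^sub>0 nat) set"
    by auto
  have "Poly_Mapping.keys (p - MConst c) - {0} = Poly_Mapping.keys p - {0}"
    by (auto simp: MConst_def in_keys_iff lookup_minus lookup_single when_def)
  then show ?thesis
    unfolding mvars_def drop_0[of "Poly_Mapping.keys (p - MConst c)"] drop_0[of "Poly_Mapping.keys p"]
    by (rule arg_cong)
qed

lemma delta_closed_ex_delta_eq_1:
  assumes "delta_closed \<delta>"
  shows "\<exists>t. \<delta> t = 1"
proof -
  let ?f = "MVar 1 - MConst 1 :: (nat, 'a) mpoly"
  have "mvars ?f = {1}"
    by (simp add: mvars_diff_MConst mvars_MVar)
  moreover have "dord (MConst 1 :: (nat, 'a) mpoly) < dord ?f"
    unfolding dord_def \<open>mvars ?f = {1}\<close> by (simp add: mvars_MConst)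
  ultimately obtain a where "dpeval \<delta> ?f a = 0"
    using assms unfolding delta_closed_def by (metis MConst_eq_0_iff one_neq_zero empty_not_insert)
  then show ?thesis
    by (auto simp: dpeval_diff dpeval_MVar dpeval_MConst)
qed

text \<open>Blum's axiom with \<open>f = y\<^bsup>(N)\<^esup>\<close> and \<open>g = Q\<close>, for N above the order of Q.\<close>

lemma dpoly_eq_0_if_vanishes_on_kernels:
  assumes "delta_closed \<delta>"
    and vanish: "\<And>N a. (\<delta> ^^ N) a = 0 \<Longrightarrow> dpeval \<delta> Q a = 0"
  shows "Q = 0"
proof (rule ccontr)
  assume "Q \<noteq> 0"
  define N where "N = Suc (Max (insert 0 (mvars Q)))"
  have "finite (mvars Q)"
    by (simp add: mvars_def)
  then have "dord Q < int N"
    by (auto simp: dord_def N_def less_Suc_eq_le)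
  then have "dord Q < dord (MVar N :: (nat, 'a) mpoly)"
    by (simp add: dord_def mvars_MVar)
  with \<open>Q \<noteq> 0\<close> assms(1) obtain a where "dpeval \<delta> (MVar N) a = 0" "dpeval \<delta> Q a \<noteq> 0"
    unfolding delta_closed_def by (metis mvars_MVar empty_not_insert)
  then show False
    using vanish by (simp add: dpeval_MVar)
qed

lemma poly_eq_linear_if_eq_on_nat:
  fixes q :: "'a::field_char_0 poly"
  assumes "\<And>k. poly q (of_nat k) = of_nat k * d"
  shows "poly q x = x * d"
proof -
  let ?r = "q - [:0, d:]"
  have "range (of_nat :: nat \<Rightarrow> 'a) \<subseteq> {x. poly ?r x = 0}"
    using assms by (auto simp: mult.commute)
  then have "infinite {x. poly ?r x = 0}"
    using range_inj_infinite[OF inj_of_nat] finite_subset by blast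
  then have "?r = 0"
    using poly_roots_finite by blast
  then show ?thesis
    by (simp add: mult.commute)
qed

context derivation
begin

text \<open>On the constants D is a polynomial function q with \<open>q(c k) = k D(c)\<close>, so q is linear along
  every line \<open>c \<nat>\<close>, and \<open>q(1) = D(1) = 0\<close>.\<close>

lemma dpoly_derivation_vanishes_on_constants:
  assumes "derivation D" and Q: "\<And>a. D a = dpeval \<delta> Q a" and c: "\<delta> c = 0"
  shows "D c = 0"
proof -
  interpret D: derivation D by fact
  define q where "q = meval (\<lambda>c. [:c:]) Q (\<lambda>k. if k = 0 then [:0, 1:] else 0)"
  have D_eq_q: "D z = poly q z" if "\<delta> z = 0" for z
  proof -
    have iterates: "(\<delta> ^^ k) z = poly (if k = 0 then [:0, 1:] else 0) z" for k
      by (induction k) (auto simp: that)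
    have "D z = mpeval Q (\<lambda>k. poly (if k = 0 then [:0, 1:] else 0) z)"
      unfolding Q dpeval_def iterates ..
    then show ?thesis
      by (simp add: q_def poly_meval_pCons)
  qed
  show ?thesis
  proof (cases "c = 0")
    case False
    have "poly (pcompose q [:0, c:]) (of_nat k) = of_nat k * D c" for k
    proof -
      have "poly (pcompose q [:0, c:]) (of_nat k) = D (c * of_nat k)"
        using c D_eq_q[of "c * of_nat k"] by (simp add: poly_pcompose mult_constant mult.commute)
      also have "\<dots> = of_nat k * D c"
        by (simp add: D.mult)
      finally show ?thesis .
    qed
    then have "poly (pcompose q [:0, c:]) (inverse c) = inverse c * D c"
      by (rule poly_eq_linear_if_eq_on_nat)
    moreover have "poly q 1 = 0"
      using D_eq_q[of 1] by simp
    ultimately show ?thesis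
      using False by (simp add: poly_pcompose)
  qed simp
qed

end

text \<open>Subtracting \<open>D(t) \<delta>\<close> for some t with \<open>\<delta> t = 1\<close> gives a derivation E that kills t and the
  constants, hence every solution of some \<open>\<delta>\<^bsup>N\<^esup> y = 0\<close>; so its differential polynomial is 0.\<close>

lemma dpoly_derivation_eq_multiple:
  assumes cl: "delta_closed \<delta>" and D: "derivation D" and Q: "\<And>a. D a = dpeval \<delta> Q a"
  shows "\<exists>\<nu>. \<forall>a. D a = \<nu> * \<delta> a"
proof -
  interpret derivation \<delta> by (rule derivation_if_delta_closed[OF cl])
  interpret D: derivation D by (rule D)
  obtain t where t: "\<delta> t = 1"
    using delta_closed_ex_delta_eq_1[OF cl] by blast
  define E where "E a = D a - D t * \<delta> a" for a
  have E: "derivation E"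
    by unfold_locales (auto simp: E_def D.add add D.mult mult algebra_simps)
  have E_t: "E t = 0"
    by (simp add: E_def t)
  have E_const: "E c = 0" if "\<delta> c = 0" for c
    using dpoly_derivation_vanishes_on_constants[OF D Q that] that by (simp add: E_def)
  define Q' where "Q' = Q - MConst (D t) * MVar 1"
  have Q': "dpeval \<delta> Q' a = E a" for a
    unfolding Q'_def E_def dpeval_diff dpeval_mult dpeval_MConst dpeval_MVar Q by simp
  have "Q' = 0"
  proof (rule dpoly_eq_0_if_vanishes_on_kernels[OF cl])
    fix N a
    assume "(\<delta> ^^ N) a = 0"
    then obtain c where "\<And>k. \<delta> (c k) = 0" "a = (\<Sum>k<N. c k * t ^ k)"
      using kernel_funpow_eq_poly[OF t] by blast
    then show "dpeval \<delta> Q' a = 0"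
      unfolding Q' using poly_in_kernel_of_derivation[OF E E_t E_const] by blast
  qed
  then have "E a = 0" for a
    using Q'[of a] by (simp add: dpeval_def)
  then show ?thesis
    unfolding E_def by (metis eq_iff_diff_eq_0)
qed

section \<open>Elementary matrices\<close>

definition unit_mat :: "'n::finite \<Rightarrow> 'n \<Rightarrow> 'a::field^'n^'n" where
  "unit_mat i j = (\<chi> a b. if a = i \<and> b = j then 1 else 0)"

definition smult_mat :: "'a::field \<Rightarrow> 'a^'n::finite^'n \<Rightarrow> 'a^'n^'n" where
  "smult_mat c A = (\<chi> a b. c * A $ a $ b)"

text \<open>For \<open>i \<noteq> j\<close> the transvection \<open>1 + s E\<^sub>i\<^sub>j\<close>, for \<open>i = j\<close> the dilation of the i-th coordinate by s.\<close>

definition elem_mat :: "'n::finite \<Rightarrow> 'n \<Rightarrow> 'a::field \<Rightarrow> 'a^'n^'n" where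
  "elem_mat i j s = (\<chi> a b. if a = i \<and> b = j then s else if a = b then 1 else 0)"

lemma unit_mat_nth [simp]: "unit_mat i j $ a $ b = (if a = i \<and> b = j then 1 else 0)"
  by (simp add: unit_mat_def)

lemma smult_mat_nth [simp]: "smult_mat c A $ a $ b = c * A $ a $ b"
  by (simp add: smult_mat_def)

lemma elem_mat_nth: "elem_mat i j s $ a $ b = (if a = i \<and> b = j then s else if a = b then 1 else 0)"
  by (simp add: elem_mat_def)

lemma mat_1_nth [simp]: "(mat 1 :: 'a::field^'n::finite^'n) $ a $ b = (if a = b then 1 else 0)"
  by (simp add: mat_def)

lemma unit_mat_mult_nth: "(unit_mat a b ** B) $ x $ y = (if x = a then B $ b $ y else 0)"
  by (simp add: matrix_matrix_mult_def if_distrib[of "\<lambda>u. u * _"] cong: if_cong)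

lemma mult_unit_mat_nth: "(B ** unit_mat a b) $ x $ y = (if y = b then B $ x $ a else 0)"
  by (simp add: matrix_matrix_mult_def if_distrib[of "\<lambda>u. _ * u"] cong: if_cong)

lemma unit_mat_mult_unit_mat: "unit_mat a b ** unit_mat c d = (if b = c then unit_mat a d else 0)"
  by (simp add: vec_eq_iff unit_mat_mult_nth)

lemma mat_eq_smult_mat: "mat c ** A = smult_mat c A"
  by (simp add: vec_eq_iff matrix_matrix_mult_def mat_def if_distrib[of "\<lambda>u. u * _"] cong: if_cong)

lemma smult_mat_mult_left: "smult_mat c A ** B = smult_mat c (A ** B)"
  by (simp add: vec_eq_iff matrix_matrix_mult_def sum_distrib_left mult.assoc)

lemma smult_mat_mult_right: "A ** smult_mat c B = smult_mat c (A ** B)"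
  by (simp add: vec_eq_iff matrix_matrix_mult_def sum_distrib_left mult_ac)

lemma smult_mat_add: "smult_mat c (A + B) = smult_mat c A + smult_mat c B"
  by (simp add: vec_eq_iff algebra_simps)

lemma smult_mat_diff: "smult_mat c (A - B) = smult_mat c A - smult_mat c B"
  by (simp add: vec_eq_iff algebra_simps)

lemma smult_mat_uminus: "smult_mat c (- A) = - smult_mat c A"
  by (simp add: vec_eq_iff)

lemma smult_mat_smult_mat [simp]: "smult_mat c (smult_mat d A) = smult_mat (c * d) A"
  by (simp add: vec_eq_iff mult.assoc)

lemma smult_mat_zero [simp]: "smult_mat c 0 = 0" "smult_mat 0 A = 0"
  by (simp_all add: vec_eq_iff)

lemma smult_mat_add_left: "smult_mat c A + smult_mat d A = smult_mat (c + d) A"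
  by (simp add: vec_eq_iff algebra_simps)

lemma matrix_add_rdistrib: "(B + C) ** A = B ** A + C ** (A :: 'a::field^'n::finite^'n)"
  by (vector matrix_matrix_mult_def sum.distrib[symmetric] field_simps)

lemma matrix_diff_ldistrib: "A ** (B - C) = A ** B - A ** (C :: 'a::field^'n::finite^'n)"
  by (vector matrix_matrix_mult_def sum_subtractf[symmetric] field_simps)

lemma matrix_diff_rdistrib: "(B - C) ** A = B ** A - C ** (A :: 'a::field^'n::finite^'n)"
  by (vector matrix_matrix_mult_def sum_subtractf[symmetric] field_simps)

lemma matrix_uminus_left: "- B ** A = - (B ** A :: 'a::field^'n::finite^'n)"
  by (vector matrix_matrix_mult_def sum_negf[symmetric])

lemma matrix_uminus_right: "A ** - B = - (A ** B :: 'a::field^'n::finite^'n)"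
  by (vector matrix_matrix_mult_def sum_negf[symmetric])

lemmas matrix_ring_simps = matrix_add_ldistrib matrix_add_rdistrib matrix_diff_ldistrib
  matrix_diff_rdistrib matrix_uminus_left matrix_uminus_right smult_mat_mult_left smult_mat_mult_right
  unit_mat_mult_unit_mat smult_mat_add smult_mat_diff smult_mat_uminus matrix_mul_assoc[symmetric]

lemma elem_mat_off_diag: "i \<noteq> j \<Longrightarrow> elem_mat i j s = mat 1 + smult_mat s (unit_mat i j)"
  by (auto simp: vec_eq_iff elem_mat_nth)

lemma elem_mat_diag: "elem_mat i i t = mat 1 + smult_mat (t - 1) (unit_mat i i)"
  by (auto simp: vec_eq_iff elem_mat_nth)

lemma elem_mat_off_diag_mult:
  "i \<noteq> j \<Longrightarrow> elem_mat i j s ** elem_mat i j s' = elem_mat i j (s + s')"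
  by (simp add: elem_mat_off_diag matrix_ring_simps algebra_simps smult_mat_add_left)

lemma elem_mat_diag_mult: "elem_mat i i s ** elem_mat i i s' = elem_mat i i (s * s')"
  by (auto simp: vec_eq_iff elem_mat_diag matrix_ring_simps unit_mat_mult_nth algebra_simps)

lemma elem_mat_off_diag_0: "i \<noteq> j \<Longrightarrow> elem_mat i j 0 = mat 1"
  by (simp add: elem_mat_off_diag)

lemma elem_mat_diag_1: "elem_mat i i 1 = mat 1"
  by (simp add: elem_mat_diag)

lemma matrix_inv_eqI:
  fixes A B :: "'a::field^'n::finite^'n"
  assumes "A ** B = mat 1"
  shows "matrix_inv A = B" "invertible A"
proof -
  have BA: "B ** A = mat 1"
    using assms matrix_left_right_inverse by blast
  show "invertible A"
    using assms BA by (auto simp: invertible_def)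
  have "A ** matrix_inv A = mat 1 \<and> matrix_inv A ** A = mat 1"
    unfolding matrix_inv_def by (rule someI[of _ B]) (use assms BA in auto)
  then have "matrix_inv A = matrix_inv A ** (A ** B)"
    by (simp add: assms)
  also have "\<dots> = B"
    using \<open>A ** matrix_inv A = mat 1 \<and> matrix_inv A ** A = mat 1\<close> by (simp add: matrix_mul_assoc)
  finally show "matrix_inv A = B" .
qed

lemma matrix_inv_right:
  fixes A :: "'a::field^'n::finite^'n"
  assumes "invertible A"
  shows "A ** matrix_inv A = mat 1"
  by (metis assms invertible_right_inverse matrix_inv_eqI(1))

lemma matrix_inv_mult:
  fixes A B :: "'a::field^'n::finite^'n"
  assumes "invertible A" "invertible B"
  shows "matrix_inv (A ** B) = matrix_inv B ** matrix_inv A"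
proof (rule matrix_inv_eqI)
  have "A ** B ** (matrix_inv B ** matrix_inv A) = A ** (B ** matrix_inv B) ** matrix_inv A"
    by (simp add: matrix_mul_assoc)
  then show "A ** B ** (matrix_inv B ** matrix_inv A) = mat 1"
    by (simp add: assms matrix_inv_right)
qed

lemma invertible_mat_1: "invertible (mat 1 :: 'a::field^'n::finite^'n)"
  by (simp add: matrix_inv_eqI)

lemma invertible_matrix_inv:
  fixes A :: "'a::field^'n::finite^'n"
  assumes "invertible A"
  shows "invertible (matrix_inv A)"
  using assms matrix_inv_right matrix_left_right_inverse matrix_inv_eqI(2) by blast

lemma invertible_mult_iff:
  fixes A B :: "'a::field^'n::finite^'n"
  shows "invertible (A ** B) \<longleftrightarrow> invertible A \<and> invertible B"
  unfolding invertible_det_nz det_mul by simp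

lemma matrix_inv_elem_mat_off_diag:
  "i \<noteq> j \<Longrightarrow> matrix_inv (elem_mat i j s) = elem_mat i j (- s)"
  and invertible_elem_mat_off_diag: "i \<noteq> j \<Longrightarrow> invertible (elem_mat i j s)"
  using matrix_inv_eqI[of "elem_mat i j s" "elem_mat i j (- s)"]
  by (simp_all add: elem_mat_off_diag_mult elem_mat_off_diag_0)

lemma matrix_inv_elem_mat_diag:
  "t \<noteq> 0 \<Longrightarrow> matrix_inv (elem_mat i i t) = elem_mat i i (inverse t)"
  by (simp add: matrix_inv_eqI elem_mat_diag_mult elem_mat_diag_1)

lemma invertible_elem_mat_diag_iff: "invertible (elem_mat i i t) \<longleftrightarrow> t \<noteq> 0"
proof
  assume "invertible (elem_mat i i t)"
  moreover have "t = 0 \<Longrightarrow> row i (elem_mat i i t) = 0"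
    by (auto simp: row_def vec_eq_iff elem_mat_nth)
  ultimately show "t \<noteq> 0"
    using det_zero_row(2) invertible_det_nz by metis
qed (use matrix_inv_eqI(2)[of "elem_mat i i t" "elem_mat i i (inverse t)"] in
    \<open>simp add: elem_mat_diag_mult elem_mat_diag_1\<close>)

lemma elem_mat_mult:
  "elem_mat k l s ** elem_mat k l s' = elem_mat k l (if k = l then s * s' else s + s')"
  by (simp add: elem_mat_diag_mult elem_mat_off_diag_mult)

lemma matrix_inv_elem_mat:
  "invertible (elem_mat k l s) \<Longrightarrow>
     matrix_inv (elem_mat k l s) = elem_mat k l (if k = l then inverse s else - s)"
  by (auto simp: invertible_elem_mat_diag_iff matrix_inv_elem_mat_diag matrix_inv_elem_mat_off_diag)

lemma det_elem_mat_off_diag: "i \<noteq> j \<Longrightarrow> det (elem_mat i j s) = 1"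
proof -
  assume ij: "i \<noteq> j"
  have "elem_mat i j s = (\<chi> k. if k = i then row i (mat 1) + s *s row j (mat 1) else row k (mat 1))"
    using ij by (auto simp: vec_eq_iff elem_mat_nth row_def)
  then show ?thesis
    using det_row_operation[OF ij, of "mat 1" s] by simp
qed

section \<open>Algebraic subgroups over the constants and their Lie algebras\<close>

lemma mat_eval_simps:
  "mat_eval (p + q) g = mat_eval p g + mat_eval q g"
  "mat_eval (p - q) g = mat_eval p g - mat_eval q g"
  "mat_eval (p * q) g = mat_eval p g * mat_eval q g"
  "mat_eval (p ^ k) g = mat_eval p g ^ k"
  "mat_eval (MVar (a, b)) g = g $ a $ b"
  "mat_eval (MConst c) g = c"
  "mat_eval 1 g = 1"
  by (simp_all add: mat_eval_def meval_simps is_ring_hom_id)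

text \<open>The polynomial \<open>p(1 + \<epsilon> X)\<close> in \<open>\<epsilon>\<close>, whose linear coefficient is the differential of p at 1.\<close>

definition tangent_poly :: "('n \<times> 'n, 'a::field) mpoly \<Rightarrow> 'a^'n::finite^'n \<Rightarrow> 'a poly" where
  "tangent_poly p X = meval (\<lambda>c. [:c:]) p (\<lambda>(i, j). [: mat 1 $ i $ j, X $ i $ j :])"

lemma tangent_poly_simps:
  "tangent_poly (p + q) X = tangent_poly p X + tangent_poly q X"
  "tangent_poly (p - q) X = tangent_poly p X - tangent_poly q X"
  "tangent_poly (p * q) X = tangent_poly p X * tangent_poly q X"
  "tangent_poly (p ^ k) X = tangent_poly p X ^ k"
  "tangent_poly (MVar (a, b)) X = [: mat 1 $ a $ b, X $ a $ b :]"
  "tangent_poly (MConst c) X = [:c:]"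
  "tangent_poly 1 X = 1"
  by (simp_all add: tangent_poly_def meval_simps is_ring_hom_pCons)

lemma lie_algebra_tangent_coeff_1:
  assumes "X \<in> lie_algebra G" "\<And>g. g \<in> G \<Longrightarrow> mat_eval p g = 0"
  shows "coeff (tangent_poly p X) 1 = 0"
  using assms by (auto simp: lie_algebra_def diff_at_one_def tangent_poly_def)

definition const_coeffs :: "('a::field \<Rightarrow> 'a) \<Rightarrow> ('v, 'a) mpoly \<Rightarrow> bool" where
  "const_coeffs \<delta> p \<longleftrightarrow> (\<forall>m. \<delta> (Poly_Mapping.lookup p m) = 0)"

lemma alg_subgroup_over_constantsI:
  assumes "\<And>p. p \<in> S \<Longrightarrow> const_coeffs \<delta> p" "is_subgroup_GL (zero_set_GL S)"
  shows "alg_subgroup_over_constants \<delta> (zero_set_GL S)"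
  using assms unfolding alg_subgroup_over_constants_def const_coeffs_def constants_def by blast

context derivation
begin

lemma const_coeffs_add: "const_coeffs \<delta> p \<Longrightarrow> const_coeffs \<delta> q \<Longrightarrow> const_coeffs \<delta> (p + q)"
  by (simp add: const_coeffs_def lookup_add add)

lemma const_coeffs_diff: "const_coeffs \<delta> p \<Longrightarrow> const_coeffs \<delta> q \<Longrightarrow> const_coeffs \<delta> (p - q)"
  by (simp add: const_coeffs_def lookup_minus diff)

lemma const_coeffs_single: "\<delta> c = 0 \<Longrightarrow> const_coeffs \<delta> (Poly_Mapping.single m c)"
  by (simp add: const_coeffs_def lookup_single when_def)

lemma const_coeffs_sum: "(\<And>i. i \<in> I \<Longrightarrow> const_coeffs \<delta> (p i)) \<Longrightarrow> const_coeffs \<delta> (\<Sum>i\<in>I. p i)"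
  by (simp add: const_coeffs_def lookup_sum sum)

lemma const_coeffs_mult: "const_coeffs \<delta> p \<Longrightarrow> const_coeffs \<delta> q \<Longrightarrow> const_coeffs \<delta> (p * q)"
  unfolding times_poly_mapping_eq_sum_single[of p q]
  by (intro const_coeffs_sum const_coeffs_single) (simp add: const_coeffs_def mult)

lemma const_coeffs_one: "const_coeffs \<delta> 1"
  by (simp add: const_coeffs_def lookup_one when_def)

lemma const_coeffs_MVar: "const_coeffs \<delta> (MVar v)"
  by (simp add: MVar_def const_coeffs_single)

lemma const_coeffs_MConst: "\<delta> c = 0 \<Longrightarrow> const_coeffs \<delta> (MConst c)"
  by (simp add: MConst_def const_coeffs_single)

lemma const_coeffs_power: "const_coeffs \<delta> p \<Longrightarrow> const_coeffs \<delta> (p ^ k)"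
  by (induction k) (simp_all add: const_coeffs_mult const_coeffs_one)

lemma const_coeffs_identity_entry: "const_coeffs \<delta> (MVar (a, b) - MConst (mat 1 $ a $ b))"
  by (simp add: const_coeffs_diff const_coeffs_MVar const_coeffs_MConst)

end

definition identity_entry_eqs :: "('n::finite \<times> 'n) set \<Rightarrow> ('n \<times> 'n, 'a::field) mpoly set" where
  "identity_entry_eqs E = {MVar (a, b) - MConst (mat 1 $ a $ b) | a b. (a, b) \<in> E}"

lemma mem_zero_set_identity_entry_eqs:
  "g \<in> zero_set_GL (identity_entry_eqs E) \<longleftrightarrow>
     invertible g \<and> (\<forall>a b. (a, b) \<in> E \<longrightarrow> g $ a $ b = mat 1 $ a $ b)"
proof -
  have "(\<forall>p \<in> identity_entry_eqs E. mat_eval p g = 0) \<longleftrightarrow>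
      (\<forall>(a, b) \<in> E. mat_eval (MVar (a, b) - MConst (mat 1 $ a $ b)) g = 0)"
    unfolding identity_entry_eqs_def by blast
  then show ?thesis
    by (auto simp: zero_set_GL_def mat_eval_simps simp del: mat_1_nth)
qed

abbreviation elem_mat_eqs :: "'n::finite \<Rightarrow> 'n \<Rightarrow> ('n \<times> 'n, 'a::field) mpoly set" where
  "elem_mat_eqs k l \<equiv> identity_entry_eqs (- {(k, l)})"

lemma mem_zero_set_elem_mat_eqs:
  "g \<in> zero_set_GL (elem_mat_eqs k l) \<longleftrightarrow> invertible g \<and> (\<exists>s. g = elem_mat k l s)"
  unfolding mem_zero_set_identity_entry_eqs
  by (auto simp: vec_eq_iff elem_mat_nth intro!: exI[of _ "g $ k $ l"])

lemma lie_algebra_identity_entry_eqs: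
  assumes "X \<in> lie_algebra (zero_set_GL (identity_entry_eqs E))" "(a, b) \<in> E"
  shows "X $ a $ b = 0"
proof -
  have "coeff (tangent_poly (MVar (a, b) - MConst (mat 1 $ a $ b)) X) 1 = 0"
    using assms by (intro lie_algebra_tangent_coeff_1) (auto simp: mem_zero_set_identity_entry_eqs mat_eval_simps)
  then show ?thesis
    by (simp add: tangent_poly_simps)
qed

lemma (in derivation) alg_subgroup_elem_mat_eqs:
  "alg_subgroup_over_constants \<delta> (zero_set_GL (elem_mat_eqs k l) :: ('a^'n::finite^'n) set)"
proof (rule alg_subgroup_over_constantsI)
  show "const_coeffs \<delta> p" if "p \<in> elem_mat_eqs k l" for p
    using that const_coeffs_identity_entry unfolding identity_entry_eqs_def by blast
  let ?G = "zero_set_GL (elem_mat_eqs k l) :: ('a^'n^'n) set"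
  have "mat 1 = elem_mat k l (mat 1 $ k $ l)"
    by (auto simp: vec_eq_iff elem_mat_nth)
  then have "mat 1 \<in> ?G"
    unfolding mem_zero_set_elem_mat_eqs using invertible_mat_1 by blast
  moreover have "g ** h \<in> ?G" if gh: "g \<in> ?G" "h \<in> ?G" for g h
  proof -
    obtain s s' where gh_eq: "g = elem_mat k l s" "h = elem_mat k l s'"
      and "invertible g" "invertible h"
      using gh unfolding mem_zero_set_elem_mat_eqs by blast
    have "invertible (g ** h)"
      using \<open>invertible g\<close> \<open>invertible h\<close> by (rule invertible_mult)
    moreover have "g ** h = elem_mat k l (if k = l then s * s' else s + s')"
      unfolding gh_eq by (rule elem_mat_mult)
    ultimately show ?thesis
      unfolding mem_zero_set_elem_mat_eqs by blast
  qed
  moreover have "matrix_inv g \<in> ?G" if "g \<in> ?G" for g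
  proof -
    from that obtain s where g: "g = elem_mat k l s" "invertible g"
      unfolding mem_zero_set_elem_mat_eqs by blast
    then have "matrix_inv g = elem_mat k l (if k = l then inverse s else - s)"
      using matrix_inv_elem_mat by blast
    then show ?thesis
      unfolding mem_zero_set_elem_mat_eqs using invertible_matrix_inv[OF g(2)] by blast
  qed
  moreover have "?G \<subseteq> {g. invertible g}"
    unfolding zero_set_GL_def by blast
  ultimately show "is_subgroup_GL ?G"
    unfolding is_subgroup_GL_def by blast
qed

lemma (in derivation) coherent_elem_mat:
  assumes "delta_coherent \<delta> f" "invertible (elem_mat k l s)"
  shows "f (elem_mat k l s) = smult_mat (f (elem_mat k l s) $ k $ l) (unit_mat k l)"
proof -
  have "elem_mat k l s \<in> zero_set_GL (elem_mat_eqs k l)"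
    using assms(2) unfolding mem_zero_set_elem_mat_eqs by blast
  then have "f (elem_mat k l s) \<in> lie_algebra (zero_set_GL (elem_mat_eqs k l))"
    using assms(1) alg_subgroup_elem_mat_eqs unfolding delta_coherent_def by blast
  then have "f (elem_mat k l s) $ a $ b = 0" if "(a, b) \<noteq> (k, l)" for a b
    using that by (intro lie_algebra_identity_entry_eqs) auto
  then show ?thesis
    by (auto simp: vec_eq_iff)
qed

definition rot_mat :: "'n::finite \<Rightarrow> 'n \<Rightarrow> 'a::field \<Rightarrow> 'a \<Rightarrow> 'a^'n^'n" where
  "rot_mat i j x y = (\<chi> a b. if a = i \<and> b = i \<or> a = j \<and> b = j then x else if a = i \<and> b = j then y
      else if a = j \<and> b = i then - y else mat 1 $ a $ b)"

lemma rot_mat_nth: "rot_mat i j x y $ a $ b = (if a = i \<and> b = i \<or> a = j \<and> b = j then x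
    else if a = i \<and> b = j then y else if a = j \<and> b = i then - y else mat 1 $ a $ b)"
  by (simp add: rot_mat_def)

lemma rot_mat_eq_unit_mats: "i \<noteq> j \<Longrightarrow> rot_mat i j x y =
    mat 1 + smult_mat (x - 1) (unit_mat i i) + smult_mat (x - 1) (unit_mat j j)
      + smult_mat y (unit_mat i j) - smult_mat y (unit_mat j i)"
  by (auto simp: vec_eq_iff rot_mat_nth)

lemma rot_mat_mult:
  "i \<noteq> j \<Longrightarrow> rot_mat i j x y ** rot_mat i j x' y' = rot_mat i j (x * x' - y * y') (x * y' + y * x')"
  by (simp add: rot_mat_eq_unit_mats matrix_ring_simps vec_eq_iff) (auto simp: algebra_simps)

lemma rot_mat_1_0: "i \<noteq> j \<Longrightarrow> rot_mat i j 1 0 = mat 1"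
  by (simp add: rot_mat_eq_unit_mats)

lemma matrix_inv_rot_mat:
  assumes "i \<noteq> j" "x\<^sup>2 + y\<^sup>2 = 1"
  shows "matrix_inv (rot_mat i j x y) = rot_mat i j x (- y)" "invertible (rot_mat i j x y)"
proof -
  have "rot_mat i j x y ** rot_mat i j x (- y) = mat 1"
    using assms by (simp add: rot_mat_mult power2_eq_square rot_mat_1_0)
  then show "matrix_inv (rot_mat i j x y) = rot_mat i j x (- y)" "invertible (rot_mat i j x y)"
    by (rule matrix_inv_eqI)+
qed

text \<open>The equations cut out the cyclic group of order 4 generated by the rotation by a right angle
  in the (i, j)-plane.\<close>

definition quarter_turn_eqs :: "'n::finite \<Rightarrow> 'n \<Rightarrow> ('n \<times> 'n, 'a::field) mpoly set" where
  "quarter_turn_eqs i j = identity_entry_eqs (- ({i, j} \<times> {i, j})) \<union>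
     {MVar (i, i) - MVar (j, j), MVar (i, j) + MVar (j, i), MVar (i, i) * MVar (i, j),
      MVar (i, i) ^ 2 + MVar (i, j) ^ 2 - 1}"

lemma zero_set_GL_Un: "zero_set_GL (S \<union> T) = zero_set_GL S \<inter> {g. \<forall>p\<in>T. mat_eval p g = 0}"
  by (auto simp: zero_set_GL_def)

lemma mem_zero_set_quarter_turn_eqs:
  assumes ij: "i \<noteq> j"
  shows "g \<in> zero_set_GL (quarter_turn_eqs i j) \<longleftrightarrow>
    (\<exists>x y. x * y = 0 \<and> x\<^sup>2 + y\<^sup>2 = 1 \<and> g = rot_mat i j x y)"
    (is "_ \<longleftrightarrow> ?rot")
proof -
  have "g \<in> zero_set_GL (quarter_turn_eqs i j) \<longleftrightarrow> invertible g \<and>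
      (\<forall>a b. (a, b) \<notin> {i, j} \<times> {i, j} \<longrightarrow> g $ a $ b = mat 1 $ a $ b) \<and>
      g $ i $ i = g $ j $ j \<and> g $ j $ i = - g $ i $ j \<and> g $ i $ i * g $ i $ j = 0 \<and>
      (g $ i $ i)\<^sup>2 + (g $ i $ j)\<^sup>2 = 1"
    unfolding quarter_turn_eqs_def zero_set_GL_Un Int_iff mem_zero_set_identity_entry_eqs
    by (auto simp: mat_eval_simps add_eq_0_iff simp del: mat_1_nth)
  also have "\<dots> \<longleftrightarrow> ?rot"
  proof
    assume "?rot"
    then obtain x y where "x * y = 0" "x\<^sup>2 + y\<^sup>2 = 1" "g = rot_mat i j x y"
      by blast
    then show "invertible g \<and>
      (\<forall>a b. (a, b) \<notin> {i, j} \<times> {i, j} \<longrightarrow> g $ a $ b = mat 1 $ a $ b) \<and>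
      g $ i $ i = g $ j $ j \<and> g $ j $ i = - g $ i $ j \<and> g $ i $ i * g $ i $ j = 0 \<and>
      (g $ i $ i)\<^sup>2 + (g $ i $ j)\<^sup>2 = 1"
      using ij matrix_inv_rot_mat(2)[OF ij] by (auto simp: rot_mat_nth simp del: mat_1_nth)
  qed (rule exI[of _ "g $ i $ i"], rule exI[of _ "g $ i $ j"],
      auto simp: vec_eq_iff rot_mat_nth simp del: mat_1_nth)
  finally show ?thesis .
qed

lemma is_subgroup_GL_quarter_turn_eqs:
  assumes ij: "i \<noteq> j"
  shows "is_subgroup_GL (zero_set_GL (quarter_turn_eqs i j) :: ('a::field^'n::finite^'n) set)"
proof -
  let ?G = "zero_set_GL (quarter_turn_eqs i j) :: ('a^'n^'n) set"
  have "mat 1 = rot_mat i j 1 (0::'a)"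
    using rot_mat_1_0[OF ij] by (rule sym)
  then have "mat 1 \<in> ?G"
    unfolding mem_zero_set_quarter_turn_eqs[OF ij] by (intro exI[of _ 1] exI[of _ 0]) simp
  moreover have "g ** h \<in> ?G" if gh_mem: "g \<in> ?G" "h \<in> ?G" for g h
  proof -
    obtain x y x' y' where xy: "x * y = 0" "x\<^sup>2 + y\<^sup>2 = 1" "x' * y' = 0" "x'\<^sup>2 + y'\<^sup>2 = 1"
      and gh: "g = rot_mat i j x y" "h = rot_mat i j x' y'"
      using gh_mem unfolding mem_zero_set_quarter_turn_eqs[OF ij] by blast
    have "(x * x' - y * y') * (x * y' + y * x') = (x' * y') * (x\<^sup>2 - y\<^sup>2) + (x * y) * (x'\<^sup>2 - y'\<^sup>2)"
      by (simp add: power2_eq_square algebra_simps)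
    moreover have "(x * x' - y * y')\<^sup>2 + (x * y' + y * x')\<^sup>2 = (x\<^sup>2 + y\<^sup>2) * (x'\<^sup>2 + y'\<^sup>2)"
      by (simp add: power2_eq_square algebra_simps)
    ultimately show ?thesis
      unfolding mem_zero_set_quarter_turn_eqs[OF ij] gh rot_mat_mult[OF ij] using xy
      by (intro exI[of _ "x * x' - y * y'"] exI[of _ "x * y' + y * x'"]) simp
  qed
  moreover have "matrix_inv g \<in> ?G" if g_mem: "g \<in> ?G" for g
  proof -
    obtain x y where "x * y = 0" "x\<^sup>2 + y\<^sup>2 = 1" "g = rot_mat i j x y"
      using g_mem unfolding mem_zero_set_quarter_turn_eqs[OF ij] by blast
    then show ?thesis
      unfolding mem_zero_set_quarter_turn_eqs[OF ij] using matrix_inv_rot_mat(1)[OF ij]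
      by (intro exI[of _ x] exI[of _ "- y"]) simp
  qed
  moreover have "?G \<subseteq> {g. invertible g}"
    unfolding zero_set_GL_def by blast
  ultimately show ?thesis
    unfolding is_subgroup_GL_def by blast
qed

lemma (in derivation) alg_subgroup_quarter_turn_eqs:
  assumes "i \<noteq> j"
  shows "alg_subgroup_over_constants \<delta> (zero_set_GL (quarter_turn_eqs i j) :: ('a^'n::finite^'n) set)"
proof (rule alg_subgroup_over_constantsI[OF _ is_subgroup_GL_quarter_turn_eqs[OF assms]])
  fix p :: "('n \<times> 'n, 'a) mpoly"
  assume "p \<in> quarter_turn_eqs i j"
  then show "const_coeffs \<delta> p"
    unfolding quarter_turn_eqs_def identity_entry_eqs_def
    by (auto simp: const_coeffs_identity_entry const_coeffs_diff const_coeffs_add const_coeffs_mult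
        const_coeffs_power const_coeffs_MVar const_coeffs_one simp del: mat_1_nth)
qed

lemma mat_eval_eq_0_if_mem_zero_set_GL: "g \<in> zero_set_GL S \<Longrightarrow> p \<in> S \<Longrightarrow> mat_eval p g = 0"
  by (simp add: zero_set_GL_def)

lemma lie_algebra_quarter_turn_eqs:
  fixes X :: "'a::field_char_0^'n::finite^'n"
  assumes "X \<in> lie_algebra (zero_set_GL (quarter_turn_eqs i j))" "i \<noteq> j"
  shows "X $ i $ j = 0" "X $ i $ i = 0"
proof -
  have "coeff (tangent_poly p X) 1 = 0" if "p \<in> quarter_turn_eqs i j" for p
    using that by (intro lie_algebra_tangent_coeff_1[OF assms(1)] mat_eval_eq_0_if_mem_zero_set_GL)
  from this[of "MVar (i, i) * MVar (i, j)"] this[of "MVar (i, i) ^ 2 + MVar (i, j) ^ 2 - 1"]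
  show "X $ i $ j = 0" "X $ i $ i = 0"
    using assms(2) by (simp_all add: quarter_turn_eqs_def tangent_poly_simps power2_eq_square)
qed

section \<open>Coherent cocycles on elementary matrices\<close>

locale coherent_cocycle = derivation \<delta> for \<delta> :: "'a::field_char_0 \<Rightarrow> 'a" +
  fixes f :: "'a^'n::finite^'n \<Rightarrow> 'a^'n^'n"
  assumes cocycle: "\<And>g h. invertible g \<Longrightarrow> invertible h \<Longrightarrow> f (g ** h) = f g + g ** f h ** matrix_inv g"
    and coherent: "delta_coherent \<delta> f"
begin

definition elem_coeff :: "'n \<Rightarrow> 'n \<Rightarrow> 'a \<Rightarrow> 'a" where
  "elem_coeff i j s = f (elem_mat i j s) $ i $ j"

lemma f_elem_mat:
  "invertible (elem_mat i j s) \<Longrightarrow> f (elem_mat i j s) = smult_mat (elem_coeff i j s) (unit_mat i j)"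
  unfolding elem_coeff_def by (rule coherent_elem_mat[OF coherent])

lemma f_elem_mat_off_diag: "i \<noteq> j \<Longrightarrow> f (elem_mat i j s) = smult_mat (elem_coeff i j s) (unit_mat i j)"
  by (simp add: f_elem_mat invertible_elem_mat_off_diag)

lemma f_elem_mat_diag: "t \<noteq> 0 \<Longrightarrow> f (elem_mat i i t) = smult_mat (elem_coeff i i t) (unit_mat i i)"
  by (simp add: f_elem_mat invertible_elem_mat_diag_iff)

lemma elem_coeff_add:
  assumes ij: "i \<noteq> j"
  shows "elem_coeff i j (s + s') = elem_coeff i j s + elem_coeff i j s'"
proof -
  have "f (elem_mat i j (s + s')) = f (elem_mat i j s) + elem_mat i j s ** f (elem_mat i j s') ** elem_mat i j (- s)"
    using cocycle[of "elem_mat i j s" "elem_mat i j s'"] ij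
    by (simp add: elem_mat_off_diag_mult invertible_elem_mat_off_diag matrix_inv_elem_mat_off_diag)
  from arg_cong[where f = "\<lambda>A. A $ i $ j", OF this] show ?thesis
    unfolding f_elem_mat_off_diag[OF ij] using ij by (simp add: elem_mat_off_diag matrix_ring_simps)
qed

text \<open>The next two identities compare both sides of the commutation relations
  \<open>d\<^sub>i(t) e\<^sub>i\<^sub>j(s) = e\<^sub>i\<^sub>j(t s) d\<^sub>i(t)\<close> and \<open>d\<^sub>j(t) e\<^sub>i\<^sub>j(s) = e\<^sub>i\<^sub>j(s / t) d\<^sub>j(t)\<close> under f.\<close>

lemma elem_coeff_scale_row:
  assumes ij: "i \<noteq> j" and t: "t \<noteq> 0"
  shows "elem_coeff i j (t * s) = t * elem_coeff i j s + t * s * elem_coeff i i t"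
proof -
  have "elem_mat i i t ** elem_mat i j s = elem_mat i j (t * s) ** elem_mat i i t"
    using ij by (simp add: elem_mat_off_diag elem_mat_diag matrix_ring_simps algebra_simps smult_mat_add_left)
  then have "f (elem_mat i i t) + elem_mat i i t ** f (elem_mat i j s) ** elem_mat i i (inverse t) =
      f (elem_mat i j (t * s)) + elem_mat i j (t * s) ** f (elem_mat i i t) ** elem_mat i j (- (t * s))"
    using cocycle[of "elem_mat i i t" "elem_mat i j s"] cocycle[of "elem_mat i j (t * s)" "elem_mat i i t"] ij t
    by (simp add: invertible_elem_mat_off_diag invertible_elem_mat_diag_iff
        matrix_inv_elem_mat_off_diag matrix_inv_elem_mat_diag)
  from arg_cong[where f = "\<lambda>A. A $ i $ j", OF this] show ?thesis
    unfolding f_elem_mat_off_diag[OF ij] f_elem_mat_diag[OF t]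
    using ij t by (simp add: elem_mat_off_diag elem_mat_diag matrix_ring_simps field_simps)
qed

lemma elem_coeff_scale_column:
  assumes ij: "i \<noteq> j" and t: "t \<noteq> 0"
  shows "elem_coeff i j s / t = elem_coeff i j (s / t) + s / t * elem_coeff j j t"
proof -
  have "elem_mat j j t ** elem_mat i j s = elem_mat i j (s / t) ** elem_mat j j t"
    using ij t by (simp add: elem_mat_off_diag elem_mat_diag matrix_ring_simps algebra_simps smult_mat_add_left)
      (simp add: field_simps)
  then have "f (elem_mat j j t) + elem_mat j j t ** f (elem_mat i j s) ** elem_mat j j (inverse t) =
      f (elem_mat i j (s / t)) + elem_mat i j (s / t) ** f (elem_mat j j t) ** elem_mat i j (- (s / t))"
    using cocycle[of "elem_mat j j t" "elem_mat i j s"] cocycle[of "elem_mat i j (s / t)" "elem_mat j j t"] ij t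
    by (simp add: invertible_elem_mat_off_diag invertible_elem_mat_diag_iff
        matrix_inv_elem_mat_off_diag matrix_inv_elem_mat_diag)
  from arg_cong[where f = "\<lambda>A. A $ i $ j", OF this] show ?thesis
    unfolding f_elem_mat_off_diag[OF ij] f_elem_mat_diag[OF t]
    using ij t by (simp add: elem_mat_off_diag elem_mat_diag matrix_ring_simps field_simps)
qed

text \<open>The quarter turn \<open>e\<^sub>i\<^sub>j(1) e\<^sub>j\<^sub>i(-1) e\<^sub>i\<^sub>j(1)\<close> has finite order, so f kills its (i, i) and (i, j) entries.\<close>

lemma elem_coeff_1:
  assumes ij: "i \<noteq> j"
  shows "elem_coeff i j 1 = 0"
proof -
  let ?u = "elem_mat i j 1" and ?l = "elem_mat j i (- 1)"
  have w: "?u ** ?l ** ?u = rot_mat i j 0 1"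
    unfolding elem_mat_off_diag[OF ij] elem_mat_off_diag[OF ij[symmetric]] rot_mat_eq_unit_mats[OF ij]
    using ij by (simp add: matrix_ring_simps vec_eq_iff)
  have "rot_mat i j 0 1 \<in> zero_set_GL (quarter_turn_eqs i j)"
    unfolding mem_zero_set_quarter_turn_eqs[OF ij] by (intro exI[of _ 0] exI[of _ 1]) simp
  then have "f (rot_mat i j 0 1) \<in> lie_algebra (zero_set_GL (quarter_turn_eqs i j))"
    using coherent alg_subgroup_quarter_turn_eqs[OF ij] unfolding delta_coherent_def by blast
  note lie = lie_algebra_quarter_turn_eqs[OF this ij]
  have "f (?u ** (?l ** ?u)) = f ?u + ?u ** (f ?l + ?l ** f ?u ** elem_mat j i 1) ** elem_mat i j (- 1)"
    using cocycle[of ?u "?l ** ?u"] cocycle[of ?l ?u] ij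
    by (simp add: invertible_mult invertible_elem_mat_off_diag matrix_inv_elem_mat_off_diag)
  then have fw: "f (rot_mat i j 0 1) = smult_mat (elem_coeff i j 1) (unit_mat i j) +
      ?u ** (smult_mat (elem_coeff j i (- 1)) (unit_mat j i) +
        ?l ** smult_mat (elem_coeff i j 1) (unit_mat i j) ** elem_mat j i 1) ** elem_mat i j (- 1)"
    unfolding w[symmetric] using ij by (simp add: matrix_mul_assoc f_elem_mat_off_diag)
  have "f (rot_mat i j 0 1) $ i $ j = elem_coeff i j 1 - elem_coeff j i (- 1)"
    "f (rot_mat i j 0 1) $ i $ i = elem_coeff j i (- 1)"
    unfolding fw using ij by (simp_all add: elem_mat_off_diag matrix_ring_simps)
  then show ?thesis
    using lie by simp
qed

lemma elem_coeff_eq_mult_diag: "i \<noteq> j \<Longrightarrow> t \<noteq> 0 \<Longrightarrow> elem_coeff i j t = t * elem_coeff i i t"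
  using elem_coeff_scale_row[of i j t 1] by (simp add: elem_coeff_1)

lemma derivation_elem_coeff:
  assumes ij: "i \<noteq> j"
  shows "derivation (elem_coeff i j)"
proof
  fix a b
  show "elem_coeff i j (a + b) = elem_coeff i j a + elem_coeff i j b"
    by (rule elem_coeff_add[OF ij])
  show "elem_coeff i j (a * b) = a * elem_coeff i j b + elem_coeff i j a * b"
  proof (cases "a = 0")
    case True
    then show ?thesis
      using elem_coeff_add[OF ij, of 0 0] by simp
  next
    case False
    then show ?thesis
      using elem_coeff_scale_row[OF ij False, of b] elem_coeff_eq_mult_diag[OF ij False]
      by (simp add: algebra_simps)
  qed
qed

text \<open>The d-th derivative of \<open>e\<^sub>i\<^sub>j(s)\<close> has (i, j) entry \<open>\<delta>\<^bsup>d\<^esup> s\<close> and constant other entries, and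
  \<open>det e\<^sub>i\<^sub>j(s) = 1\<close>; substituting this into the formula for f gives a differential polynomial in s.\<close>

lemma elem_coeff_eq_dpeval:
  assumes ij: "i \<noteq> j" and "is_delta_map \<delta> f"
  shows "\<exists>Q. \<forall>s. elem_coeff i j s = dpeval \<delta> Q s"
proof -
  obtain F where F: "\<And>g a b. invertible g \<Longrightarrow> f g $ a $ b = delta_map_eval \<delta> (F a b) g"
    using assms(2) unfolding is_delta_map_def by blast
  define X :: "(nat \<times> 'n \<times> 'n) option \<Rightarrow> (nat, 'a) mpoly" where
    "X v = (case v of None \<Rightarrow> MConst 1 | Some (d, a, b) \<Rightarrow>
        if (a, b) = (i, j) then MVar d else MConst ((\<delta> ^^ d) (mat 1 $ a $ b)))" for v
  have "elem_coeff i j s = dpeval \<delta> (meval MConst (F i j) X) s" for s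
  proof -
    have "elem_coeff i j s = delta_map_eval \<delta> (F i j) (elem_mat i j s)"
      unfolding elem_coeff_def by (rule F[OF invertible_elem_mat_off_diag[OF ij]])
    also have "\<dots> = mpeval (F i j) (\<lambda>v. dpeval \<delta> (X v) s)"
      unfolding delta_map_eval_def using ij
      by (intro arg_cong[of _ _ "mpeval (F i j)"] ext)
        (auto simp: X_def dpeval_MConst dpeval_MVar det_elem_mat_off_diag elem_mat_nth split: option.splits)
    finally show ?thesis
      by (simp add: dpeval_def mpeval_subst)
  qed
  then show ?thesis
    by blast
qed

end

section \<open>Generation of matrices by elementary matrices\<close>

lemma elem_mat_mult_nth:
  fixes B :: "'a::field^'n::finite^'n"
  shows "l \<noteq> k \<Longrightarrow> (elem_mat l k c ** B) $ a $ b = B $ a $ b + (if a = l then c * B $ k $ b else 0)"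
  by (simp add: elem_mat_off_diag matrix_add_rdistrib smult_mat_mult_left unit_mat_mult_nth)

lemma mult_elem_mat_nth:
  fixes B :: "'a::field^'n::finite^'n"
  shows "l \<noteq> k \<Longrightarrow> (B ** elem_mat l k c) $ a $ b = B $ a $ b + (if b = k then c * B $ a $ l else 0)"
  by (simp add: elem_mat_off_diag matrix_add_ldistrib smult_mat_mult_right mult_unit_mat_nth)

text \<open>Row operations with pivot \<open>B $ k $ k\<close> clear column k without touching the columns outside K.\<close>

lemma clear_column_induct:
  fixes P :: "'a::field^'n::finite^'n \<Rightarrow> bool"
  assumes mult: "\<And>A B. P A \<Longrightarrow> P B \<Longrightarrow> P (A ** B)"
    and transvection: "\<And>i j c. i \<noteq> j \<Longrightarrow> P (elem_mat i j c)"
    and "k \<in> K"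
    and cleared: "\<And>B. (\<And>i j. j \<notin> K \<Longrightarrow> i \<noteq> j \<Longrightarrow> B $ i $ j = 0) \<Longrightarrow>
        (\<And>i. i \<noteq> k \<Longrightarrow> B $ i $ k = 0) \<Longrightarrow> P B"
    and "B $ k $ k \<noteq> 0"
    and "\<And>i j. j \<notin> K \<Longrightarrow> i \<noteq> j \<Longrightarrow> B $ i $ j = 0"
  shows "P B"
proof -
  have "\<And>B. B $ k $ k \<noteq> 0 \<Longrightarrow> (\<And>i j. j \<notin> K \<Longrightarrow> i \<noteq> j \<Longrightarrow> B $ i $ j = 0) \<Longrightarrow>
      (\<And>i. i \<notin> L \<Longrightarrow> i \<noteq> k \<Longrightarrow> B $ i $ k = 0) \<Longrightarrow> P B" if "finite L" for L
    using that
  proof (induction L rule: finite_induct)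
    case empty
    then show ?case
      using cleared by blast
  next
    case (insert l L)
    fix B :: "'a^'n^'n"
    assume pivot: "B $ k $ k \<noteq> 0" and clean: "\<And>i j. j \<notin> K \<Longrightarrow> i \<noteq> j \<Longrightarrow> B $ i $ j = 0"
      and column: "\<And>i. i \<notin> insert l L \<Longrightarrow> i \<noteq> k \<Longrightarrow> B $ i $ k = 0"
    show "P B"
    proof (cases "l = k")
      case True
      then show ?thesis
        using insert.IH[OF pivot clean] column by simp
    next
      case lk: False
      define c where "c = B $ l $ k / B $ k $ k"
      define C where "C = elem_mat l k (- c) ** B"
      have C_nth: "C $ a $ b = B $ a $ b + (if a = l then - c * B $ k $ b else 0)" for a b
        unfolding C_def by (rule elem_mat_mult_nth[OF lk])
      have "C $ k $ k \<noteq> 0"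
        using pivot lk by (simp add: C_nth)
      moreover have "C $ i $ j = 0" if "j \<notin> K" "i \<noteq> j" for i j
      proof -
        have "k \<noteq> j"
          using that \<open>k \<in> K\<close> by blast
        then show ?thesis
          using clean that by (simp add: C_nth)
      qed
      moreover have "C $ i $ k = 0" if "i \<notin> L" "i \<noteq> k" for i
        using column[of i] that pivot by (cases "i = l") (simp_all add: C_nth c_def)
      ultimately have "P C"
        by (rule insert.IH)
      moreover have "B = elem_mat l k c ** C"
        using lk by (simp add: C_def matrix_mul_assoc elem_mat_off_diag_mult elem_mat_off_diag_0)
      ultimately show ?thesis
        using mult transvection[OF lk] by metis
    qed
  qed
  from this[OF finite[of UNIV] assms(5,6)] show ?thesis
    by simp
qed

lemma diagonal_induct:
  fixes P :: "'a::field^'n::finite^'n \<Rightarrow> bool"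
  assumes mult: "\<And>A B. P A \<Longrightarrow> P B \<Longrightarrow> P (A ** B)"
    and dilation: "\<And>k t. P (elem_mat k k t)"
    and diagonal: "\<And>i j. i \<noteq> j \<Longrightarrow> A $ i $ j = 0"
  shows "P A"
proof -
  have "\<And>A. (\<And>i j. i \<noteq> j \<Longrightarrow> A $ i $ j = 0) \<Longrightarrow> (\<And>k. k \<notin> S \<Longrightarrow> A $ k $ k = 1) \<Longrightarrow> P A"
    if "finite S" for S
    using that
  proof (induction S rule: finite_induct)
    case empty
    fix A :: "'a^'n^'n"
    assume "\<And>i j. i \<noteq> j \<Longrightarrow> A $ i $ j = 0" "\<And>k. k \<notin> {} \<Longrightarrow> A $ k $ k = 1"
    then have "A = elem_mat k k 1" for k
      by (auto simp: vec_eq_iff elem_mat_nth)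
    then show "P A"
      using dilation by metis
  next
    case (insert k S)
    fix A :: "'a^'n^'n"
    assume diag: "\<And>i j. i \<noteq> j \<Longrightarrow> A $ i $ j = 0" and ones: "\<And>l. l \<notin> insert k S \<Longrightarrow> A $ l $ l = 1"
    define A' where "A' = (\<chi> a b. if a = k \<and> b = k then 1 else A $ a $ b)"
    have "P A'"
      by (rule insert.IH) (use diag ones in \<open>auto simp: A'_def\<close>)
    moreover have "A = A' ** elem_mat k k (A $ k $ k)"
      using diag by (auto simp: vec_eq_iff elem_mat_diag matrix_add_ldistrib smult_mat_mult_right
          mult_unit_mat_nth A'_def)
    ultimately show "P A"
      using mult dilation by metis
  qed
  from this[OF finite[of UNIV] diagonal] show ?thesis
    by simp
qed

lemma add_column_to_zero_pivot:
  fixes A :: "'a::field^'n::finite^'n"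
  assumes "A $ k $ k = 0" "row k A \<noteq> 0"
  obtains l where "l \<noteq> k" "(A ** elem_mat l k 1) $ k $ k \<noteq> 0"
    "\<And>i j. j \<noteq> k \<Longrightarrow> (A ** elem_mat l k 1) $ i $ j = A $ i $ j"
proof -
  obtain l where l: "A $ k $ l \<noteq> 0"
    using assms(2) by (auto simp: row_def vec_eq_iff)
  then have lk: "l \<noteq> k"
    using assms(1) by auto
  show ?thesis
    using that[OF lk] mult_elem_mat_nth[OF lk, of A 1] assms(1) l by simp
qed

lemma matrix_induct_elem_mat [case_names mult transvection dilation zero_row]:
  fixes P :: "'a::field^'n::finite^'n \<Rightarrow> bool"
  assumes mult: "\<And>A B. P A \<Longrightarrow> P B \<Longrightarrow> P (A ** B)"
    and transvection: "\<And>i j c. i \<noteq> j \<Longrightarrow> P (elem_mat i j c)"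
    and dilation: "\<And>k t. P (elem_mat k k t)"
    and zero_row: "\<And>A i. row i A = 0 \<Longrightarrow> P A"
  shows "P A"
proof -
  have "\<And>A. (\<And>i j. j \<notin> K \<Longrightarrow> i \<noteq> j \<Longrightarrow> A $ i $ j = 0) \<Longrightarrow> P A" if "finite K" for K
    using that
  proof (induction K rule: finite_induct)
    case empty
    then show ?case
      using diagonal_induct[OF mult dilation] by blast
  next
    case (insert k K)
    have pivot_case: "P B"
      if "B $ k $ k \<noteq> 0" "\<And>i j. j \<notin> insert k K \<Longrightarrow> i \<noteq> j \<Longrightarrow> B $ i $ j = 0" for B
    proof (rule clear_column_induct[OF mult transvection insertI1 _ that])
      fix C :: "'a^'n^'n"
      assume "\<And>i j. j \<notin> insert k K \<Longrightarrow> i \<noteq> j \<Longrightarrow> C $ i $ j = 0" "\<And>i. i \<noteq> k \<Longrightarrow> C $ i $ k = 0"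
      then have "C $ i $ j = 0" if "j \<notin> K" "i \<noteq> j" for i j
        using that by (cases "j = k") auto
      then show "P C"
        by (rule insert.IH)
    qed
    fix A :: "'a^'n^'n"
    assume clean: "\<And>i j. j \<notin> insert k K \<Longrightarrow> i \<noteq> j \<Longrightarrow> A $ i $ j = 0"
    consider "A $ k $ k \<noteq> 0" | "row k A = 0" | "A $ k $ k = 0" "row k A \<noteq> 0"
      by blast
    then show "P A"
    proof cases
      case 1
      then show ?thesis
        using pivot_case clean by blast
    next
      case 2
      then show ?thesis
        by (rule zero_row)
    next
      case 3
      obtain l where lk: "l \<noteq> k" and pivot: "(A ** elem_mat l k 1) $ k $ k \<noteq> 0"
        and same_columns: "\<And>i j. j \<noteq> k \<Longrightarrow> (A ** elem_mat l k 1) $ i $ j = A $ i $ j"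
        using add_column_to_zero_pivot[OF 3] by blast
      have "P (A ** elem_mat l k 1)"
        using pivot clean same_columns by (intro pivot_case) auto
      moreover have "A = A ** elem_mat l k 1 ** elem_mat l k (- 1)"
        using lk by (simp flip: matrix_mul_assoc add: elem_mat_off_diag_mult elem_mat_off_diag_0)
      ultimately show ?thesis
        using mult transvection[OF lk] by metis
    qed
  qed
  from this[OF finite[of UNIV]] show ?thesis
    by simp
qed

section \<open>The logarithmic derivative\<close>

context derivation
begin

lemma dmat_mult: "dmat \<delta> (A ** B) = dmat \<delta> A ** B + A ** dmat \<delta> (B :: 'a^'n::finite^'n)"
  by (simp add: vec_eq_iff dmat_def matrix_matrix_mult_def sum mult sum.distrib algebra_simps)

lemma dmat_elem_mat: "dmat \<delta> (elem_mat i j s) = smult_mat (\<delta> s) (unit_mat i j)"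
  by (auto simp: vec_eq_iff dmat_def elem_mat_nth)

lemma log_derivative_mult:
  fixes A B :: "'a^'n::finite^'n"
  assumes A: "invertible A" and B: "invertible B"
  shows "dmat \<delta> (A ** B) ** matrix_inv (A ** B) =
    dmat \<delta> A ** matrix_inv A + A ** (dmat \<delta> B ** matrix_inv B) ** matrix_inv A"
proof -
  have "dmat \<delta> (A ** B) ** matrix_inv (A ** B) =
      (dmat \<delta> A ** B + A ** dmat \<delta> B) ** (matrix_inv B ** matrix_inv A)"
    by (simp add: dmat_mult matrix_inv_mult[OF A B])
  also have "\<dots> = dmat \<delta> A ** (B ** matrix_inv B) ** matrix_inv A + A ** (dmat \<delta> B ** matrix_inv B) ** matrix_inv A"
    by (simp add: matrix_add_rdistrib matrix_mul_assoc)
  finally show ?thesis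
    by (simp add: matrix_inv_right[OF B])
qed

end

lemma ex_other_index:
  assumes "CARD('n::finite) \<ge> 2"
  shows "\<exists>j::'n. i \<noteq> j"
proof (rule ccontr)
  assume "\<not> (\<exists>j::'n. i \<noteq> j)"
  then have "CARD('n) = card {i}"
    by (metis (mono_tags) UNIV_eq_I singletonI)
  then show False
    using assms by simp
qed

context coherent_cocycle
begin

lemma elem_coeff_diag_eq:
  assumes ij: "i \<noteq> j" and off_diag: "\<And>s. elem_coeff i j s = \<nu> * \<delta> s" and t: "t \<noteq> 0"
  shows "elem_coeff i i t = \<nu> * \<delta> t / t" "elem_coeff j j t = \<nu> * \<delta> t / t"
proof -
  show "elem_coeff i i t = \<nu> * \<delta> t / t"
    using elem_coeff_eq_mult_diag[OF ij t] off_diag[of t] t by (simp add: field_simps)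
  show "elem_coeff j j t = \<nu> * \<delta> t / t"
    using elem_coeff_scale_column[OF ij t, of t] off_diag[of t] t by (simp add: elem_coeff_1[OF ij])
qed

text \<open>Each off-diagonal coefficient is a multiple \<open>\<nu>\<^sub>i\<^sub>j \<delta>\<close>, and the diagonal coefficients show that
  \<open>\<nu>\<^sub>i\<^sub>j\<close> depends neither on i nor on j.\<close>

lemma elem_coeff_eq_uniform:
  assumes "delta_closed \<delta>" "is_delta_map \<delta> f" "CARD('n) \<ge> 2"
  obtains \<nu> where "\<And>i j s. i \<noteq> j \<Longrightarrow> elem_coeff i j s = \<nu> * \<delta> s"
    and "\<And>i t. t \<noteq> 0 \<Longrightarrow> elem_coeff i i t = \<nu> * \<delta> t / t"
proof -
  define \<nu> where "\<nu> i j = (SOME \<nu>. \<forall>s. elem_coeff i j s = \<nu> * \<delta> s)" for i j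
  have \<nu>: "elem_coeff i j s = \<nu> i j * \<delta> s" if ij: "i \<noteq> j" for i j s
  proof -
    obtain Q where "\<And>s. elem_coeff i j s = dpeval \<delta> Q s"
      using elem_coeff_eq_dpeval[OF ij assms(2)] by blast
    then have "\<exists>\<nu>. \<forall>s. elem_coeff i j s = \<nu> * \<delta> s"
      by (rule dpoly_derivation_eq_multiple[OF assms(1) derivation_elem_coeff[OF ij]])
    then show ?thesis
      unfolding \<nu>_def by (rule someI_ex[THEN spec])
  qed
  obtain t where t: "\<delta> t = 1"
    using delta_closed_ex_delta_eq_1[OF assms(1)] by blast
  then have "t \<noteq> 0"
    by auto
  define c where "c k = t * elem_coeff k k t" for k
  have \<nu>_eq: "\<nu> i j = c i" "\<nu> i j = c j" if "i \<noteq> j" for i j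
    using elem_coeff_diag_eq[OF that \<nu>[OF that] \<open>t \<noteq> 0\<close>] t \<open>t \<noteq> 0\<close> by (simp_all add: c_def)
  obtain k0 :: 'n where True
    by blast
  have c_const: "c k = c k0" for k
    using \<nu>_eq[of k k0] by (cases "k = k0") simp_all
  show ?thesis
  proof
    show "elem_coeff i j s = c k0 * \<delta> s" if "i \<noteq> j" for i j s
      using \<nu>[OF that] \<nu>_eq(1)[OF that] c_const by simp
    show "elem_coeff i i t = c k0 * \<delta> t / t" if "t \<noteq> 0" for i t
    proof -
      obtain j :: 'n where ij: "i \<noteq> j"
        using ex_other_index[OF assms(3)] by blast
      show ?thesis
        using elem_coeff_diag_eq(1)[OF ij \<nu>[OF ij] that] \<nu>_eq(1)[OF ij] c_const by simp
    qed
  qed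
qed

lemma f_eq_log_derivative:
  assumes off_diag: "\<And>i j s. i \<noteq> j \<Longrightarrow> elem_coeff i j s = \<nu> * \<delta> s"
    and diag: "\<And>i t. t \<noteq> 0 \<Longrightarrow> elem_coeff i i t = \<nu> * \<delta> t / t"
  shows "invertible g \<Longrightarrow> f g = smult_mat \<nu> (dmat \<delta> g ** matrix_inv g)"
proof (induction g rule: matrix_induct_elem_mat)
  case (mult A B)
  then have A: "invertible A" and B: "invertible B"
    by (simp_all add: invertible_mult_iff)
  then show ?case
    using mult by (simp add: cocycle log_derivative_mult smult_mat_add smult_mat_mult_left smult_mat_mult_right)
next
  case (transvection i j c)
  then have ij: "i \<noteq> j"
    by simp
  show ?case
    unfolding f_elem_mat_off_diag[OF ij] off_diag[OF ij] dmat_elem_mat matrix_inv_elem_mat_off_diag[OF ij]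
    using ij by (simp add: elem_mat_off_diag matrix_ring_simps)
next
  case (dilation k t)
  then have t: "t \<noteq> 0"
    by (simp add: invertible_elem_mat_diag_iff)
  show ?case
    unfolding f_elem_mat_diag[OF t] diag[OF t] dmat_elem_mat matrix_inv_elem_mat_diag[OF t]
    using t by (auto simp: elem_mat_diag matrix_ring_simps vec_eq_iff field_simps)
next
  case (zero_row A i)
  then show ?case
    by (simp add: det_zero_row(2) invertible_det_nz)
qed

end

theorem theorem1p4:
  fixes \<delta> :: "'a::field_char_0 \<Rightarrow> 'a"
    and f :: "'a^'n::finite^'n \<Rightarrow> 'a^'n^'n"
  assumes "delta_closed \<delta>"
    and "CARD('n) \<ge> 2"
    and "is_delta_map \<delta> f"
    and "\<And>g1 g2. invertible g1 \<Longrightarrow> invertible g2 \<Longrightarrow>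
           f (g1 ** g2) = f g1 + g1 ** f g2 ** matrix_inv g1"
    and "delta_coherent \<delta> f"
  shows "\<exists>\<nu>. \<forall>g. invertible g \<longrightarrow> f g = mat \<nu> ** (dmat \<delta> g ** matrix_inv g)"
proof -
  interpret coherent_cocycle \<delta> f
    using derivation_if_delta_closed[OF assms(1)] assms(4,5)
    by (simp add: coherent_cocycle_def coherent_cocycle_axioms_def)
  obtain \<nu> where "\<And>i j s. i \<noteq> j \<Longrightarrow> elem_coeff i j s = \<nu> * \<delta> s"
    and "\<And>i t. t \<noteq> 0 \<Longrightarrow> elem_coeff i i t = \<nu> * \<delta> t / t"
    using elem_coeff_eq_uniform[OF assms(1,3,2)] by blast
  then have "f g = mat \<nu> ** (dmat \<delta> g ** matrix_inv g)" if "invertible g" for g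
    using f_eq_log_derivative that by (simp add: mat_eq_smult_mat)
  then show ?thesis
    by blast
qed

end
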